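(* For all integers $n,p,m\ge0$, $$\sum_{k=0}^n\binom{k+p}{k}H_{n-k}(m)\,(H_{k+p}-H_p)=\sum_{k=0}^n\binom{k+p}{k}H_{n-k}(m+1).$$ In particular, $\sum_{k=0}^n\binom{k+p}{k}(H_{k+p}-H_p)=\sum_{k=0}^n\binom{k+p}{k}H_{n-k}$ and $\sum_{k=0}^n\binom{k+p}{k}H_{n-k}(H_{k+p}-H_p)=\sum_{k=0}^n\binom{k+p}{k}\left(H_{n-k}^2-H_{n-k}^{(2)}\right)$.
   Context: For integers $m\ge 1$, $n\ge 0$, the multiple harmonic-like numbers are $H_n(m)=\sum_{1\le k_1+k_2+\cdots+k_m\le n}\frac{1}{k_1k_2\cdots k_m}$ (sum over positive integers $k_1,\dots,k_m$), with $H_n(0)=1$ for $n\ge 0$ and $H_0(m)=0$ for $m\ge1$. Equivalently, $\sum_{n\ge0}H_n(m)z^n=\frac{(-\ln(1-z))^m}{1-z}$. $H_n=\sum_{k=1}^n\frac1k$, $H_n^{(2)}=\sum_{k=1}^n\frac1{k^2}$. *)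

theory Defs
  imports "HOL-Analysis.Analysis"
begin

text \<open>For m = 0 the only tuple is the empty one, giving H_n(0) = 1;
  for n = 0, m \<ge> 1 there are no tuples, giving H_0(m) = 0.\<close>
definition mharm :: "nat \<Rightarrow> nat \<Rightarrow> real" where
  "mharm n m = (\<Sum>ks \<in> {ks :: nat list. length ks = m \<and> (\<forall>k\<in>set ks. 1 \<le> k) \<and> sum_list ks \<le> n}.
                  1 / real (prod_list ks))"

definition harm2 :: "nat \<Rightarrow> real" where
  "harm2 n = (\<Sum>k=1..n. 1 / (real k)^2)"

end

(*
  Generating functions: with L = -ln(1 - z), the series of H_n(m) is L^m/(1 - z), and the
  series of C(k+p,k) (H_(k+p) - H_p) is L/(1 - z)^(p+1) (for p = 0 it is the series of H_k,
  and multiplying by 1 - z lowers p by one on both sides). The left-hand sum is thus the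
  n-th coefficient of L/(1 - z)^(p+1) * L^m/(1 - z) = 1/(1 - z)^(p+1) * L^(m+1)/(1 - z).
  For H_n(2): the derivative of L^2 is 2L/(1 - z), so n [z^n] L^2 = 2 H_(n-1), which is
  also the n-th increment of H_n^2 - H_n^(2).
*)
theory Submission
  imports Defs "HOL-Computational_Algebra.Formal_Power_Series"
begin

(* HOL-Analysis binds $ to vector components; give it back to power series coefficients. *)
unbundle no vec_syntax
notation fps_nth (infixl \<open>$\<close> 75)

lemma one_minus_fps_X_mult_nth:
  fixes f :: "'a::comm_ring_1 fps"
  shows "((1 - fps_X) * f) $ n = (if n = 0 then f $ 0 else f $ n - f $ (n - 1))"
  by (simp add: left_diff_distrib)

definition mharm_tuples :: "nat \<Rightarrow> nat \<Rightarrow> nat list set" where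
  "mharm_tuples N m = {ks. length ks = m \<and> (\<forall>k\<in>set ks. 1 \<le> k) \<and> sum_list ks \<le> N}"

lemma finite_mharm_tuples: "finite (mharm_tuples N m)"
proof (rule finite_subset)
  show "mharm_tuples N m \<subseteq> {ks. set ks \<subseteq> {0..N} \<and> length ks = m}"
    unfolding mharm_tuples_def using elem_le_sum_list by (fastforce simp: in_set_conv_nth)
  show "finite {ks. set ks \<subseteq> {0..N} \<and> length ks = m}"
    by (rule finite_lists_length_eq) simp
qed

lemma mharm_tuples_Suc:
  "mharm_tuples N (Suc m) = (\<lambda>(j, ks). j # ks) ` (SIGMA j:{1..N}. mharm_tuples (N - j) m)"
  unfolding mharm_tuples_def by (fastforce simp: length_Suc_conv)

lemma mharm_eq_sum_tuples: "mharm N m = (\<Sum>ks\<in>mharm_tuples N m. 1 / real (prod_list ks))"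
  unfolding mharm_def mharm_tuples_def ..

lemma mharm_0: "mharm N 0 = 1"
proof -
  have "mharm_tuples N 0 = {[]}"
    unfolding mharm_tuples_def by auto
  then show ?thesis
    by (simp add: mharm_eq_sum_tuples)
qed

lemma mharm_Suc: "mharm N (Suc m) = (\<Sum>j=0..N. 1 / real j * mharm (N - j) m)"
proof -
  have "inj_on (\<lambda>(j, ks). j # ks) (SIGMA j:{1..N}. mharm_tuples (N - j) m)"
    by (auto simp: inj_on_def)
  then have "mharm N (Suc m) =
      (\<Sum>(j, ks)\<in>(SIGMA j:{1..N}. mharm_tuples (N - j) m). 1 / real j * (1 / real (prod_list ks)))"
    by (simp add: mharm_eq_sum_tuples mharm_tuples_Suc sum.reindex case_prod_unfold)
  also have "\<dots> = (\<Sum>j=1..N. 1 / real j * mharm (N - j) m)"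
    by (simp add: sum.Sigma[symmetric] finite_mharm_tuples mharm_eq_sum_tuples sum_distrib_left)
  also have "\<dots> = (\<Sum>j=0..N. 1 / real j * mharm (N - j) m)"
    by (rule sum.mono_neutral_left) auto
  finally show ?thesis .
qed

(* The coefficients of -ln(1 - z); the junk value 1/0 = 0 supplies the constant term. *)
definition log_fps :: "real fps" where
  "log_fps = Abs_fps (\<lambda>j. 1 / real j)"

definition mharm_fps :: "nat \<Rightarrow> real fps" where
  "mharm_fps m = Abs_fps (\<lambda>N. mharm N m)"

lemma mharm_fps_0: "(1 - fps_X) * mharm_fps 0 = 1"
  by (rule fps_ext) (simp add: one_minus_fps_X_mult_nth mharm_fps_def mharm_0)

lemma mharm_fps_Suc: "mharm_fps (Suc m) = log_fps * mharm_fps m"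
  by (rule fps_ext) (simp add: fps_mult_nth mharm_fps_def log_fps_def mharm_Suc)

lemma mharm_1: "mharm N 1 = harm N"
proof -
  have "mharm N 1 = (\<Sum>j=0..N. 1 / real j)"
    by (simp add: mharm_Suc mharm_0)
  also have "\<dots> = harm N"
    unfolding harm_def by (rule sum.mono_neutral_cong_right) (auto simp: divide_inverse)
  finally show ?thesis .
qed

lemma fps_deriv_log_fps: "fps_deriv log_fps = mharm_fps 0"
  by (rule fps_ext) (simp add: log_fps_def mharm_fps_def mharm_0 del: of_nat_Suc)

lemma mharm_2_Suc: "mharm (Suc N) 2 = mharm N 2 + 2 * harm N / real (Suc N)"
proof -
  have "(1 - fps_X) * mharm_fps 2 = log_fps ^ 2 * ((1 - fps_X) * mharm_fps 0)"
    by (simp add: numeral_2_eq_2 mharm_fps_Suc power2_eq_square ac_simps)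
  then have "(1 - fps_X) * mharm_fps 2 = log_fps ^ 2"
    by (simp add: mharm_fps_0)
  then have "mharm (Suc N) 2 - mharm N 2 = (log_fps ^ 2) $ Suc N"
    by (metis one_minus_fps_X_mult_nth mharm_fps_def fps_nth_Abs_fps diff_Suc_1 nat.distinct(1))
  also have "real (Suc N) * \<dots> = fps_deriv (log_fps ^ 2) $ N"
    by simp
  also have "fps_deriv (log_fps ^ 2) = 2 * mharm_fps 1"
    by (simp add: fps_deriv_log_fps mharm_fps_Suc power2_eq_square)
  also have "(2 * mharm_fps 1) $ N = 2 * harm N"
    using mharm_1[of N] by (simp add: mharm_fps_def)
  finally show ?thesis
    by (simp add: field_simps)
qed

lemma mharm_2: "mharm N 2 = harm N ^ 2 - harm2 N"
proof (induction N)
  case 0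
  show ?case
    by (simp add: mharm_Suc numeral_2_eq_2 harm2_def harm_expand(1))
next
  case (Suc N)
  have harm_step: "harm (Suc N) = harm N + 1 / real (Suc N)"
    and harm2_step: "harm2 (Suc N) = harm2 N + 1 / real (Suc N) ^ 2"
    by (simp_all add: harm_Suc harm2_def divide_inverse)
  show ?case
    unfolding mharm_2_Suc Suc.IH harm_step harm2_step by (simp add: power2_sum power_divide)
qed

definition binom_fps :: "nat \<Rightarrow> real fps" where
  "binom_fps p = Abs_fps (\<lambda>k. real ((k + p) choose k))"

definition harm_binom_fps :: "nat \<Rightarrow> real fps" where
  "harm_binom_fps p = Abs_fps (\<lambda>k. real ((k + p) choose k) * (harm (k + p) - harm p))"

lemma binom_fps_0: "binom_fps 0 = mharm_fps 0"
  by (rule fps_ext) (simp add: binom_fps_def mharm_fps_def mharm_0)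

lemma binom_fps_Suc: "(1 - fps_X) * binom_fps (Suc p) = binom_fps p"
  by (rule fps_ext) (auto simp: one_minus_fps_X_mult_nth binom_fps_def gr0_conv_Suc)

lemma harm_binom_fps_0: "harm_binom_fps 0 = log_fps * binom_fps 0"
proof -
  have "harm_binom_fps 0 = mharm_fps 1"
    using mharm_1 by (intro fps_ext) (simp add: harm_binom_fps_def mharm_fps_def harm_expand(1))
  then show ?thesis
    by (simp add: mharm_fps_Suc binom_fps_0)
qed

lemma harm_binom_fps_Suc: "(1 - fps_X) * harm_binom_fps (Suc p) = harm_binom_fps p"
proof (rule fps_ext)
  fix n
  show "((1 - fps_X) * harm_binom_fps (Suc p)) $ n = harm_binom_fps p $ n"
  proof (cases n)
    case 0
    then show ?thesis by (simp add: one_minus_fps_X_mult_nth harm_binom_fps_def)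
  next
    case (Suc k)
    define a b where "a = real (Suc (k + p) choose Suc k)" and "b = real (Suc (k + p) choose k)"
    define X :: real where "X = harm (Suc (k + p))"
    have "real (Suc k) * a = real (Suc p) * b"
      unfolding a_def b_def by (metis Suc_times_binomial_add of_nat_mult)
    then have ab: "(a + b) / real (Suc (Suc (k + p))) = a / real (Suc p)"
      by (simp add: field_simps)
    have "((1 - fps_X) * harm_binom_fps (Suc p)) $ n
        = (a + b) * (X + 1 / real (Suc (Suc (k + p))) - (harm p + 1 / real (Suc p)))
          - b * (X - (harm p + 1 / real (Suc p)))"
      unfolding Suc a_def b_def X_def
      by (simp add: one_minus_fps_X_mult_nth harm_binom_fps_def harm_Suc divide_inverse)
    also have "\<dots> = a * (X - harm p) + ((a + b) / real (Suc (Suc (k + p))) - a / real (Suc p))"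
      by (simp add: algebra_simps add_divide_distrib)
    also have "\<dots> = harm_binom_fps p $ n"
      unfolding ab by (simp add: Suc a_def X_def harm_binom_fps_def)
    finally show ?thesis .
  qed
qed

lemma harm_binom_fps_eq: "harm_binom_fps p = log_fps * binom_fps p"
proof (induction p)
  case 0
  show ?case by (rule harm_binom_fps_0)
next
  case (Suc p)
  have "(1 - fps_X) * harm_binom_fps (Suc p) = log_fps * ((1 - fps_X) * binom_fps (Suc p))"
    by (simp only: harm_binom_fps_Suc binom_fps_Suc Suc)
  moreover have "(1 - fps_X :: real fps) \<noteq> 0"
    by (metis fps_zero_nth fps_one_nth mult_1_right one_minus_fps_X_mult_nth zero_neq_one)
  ultimately show ?case
    by (simp add: ac_simps)
qed

lemma sum_binom_harm_diff_mharm: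
  "(\<Sum>k=0..n. real ((k+p) choose k) * mharm (n-k) m * (harm (k+p) - harm p))
     = (\<Sum>k=0..n. real ((k+p) choose k) * mharm (n-k) (m+1))"
proof -
  have "(\<Sum>k=0..n. real ((k+p) choose k) * mharm (n-k) m * (harm (k+p) - harm p))
      = (harm_binom_fps p * mharm_fps m) $ n"
    unfolding fps_mult_nth
    by (intro sum.cong) (simp_all add: harm_binom_fps_def mharm_fps_def ac_simps)
  also have "harm_binom_fps p * mharm_fps m = binom_fps p * mharm_fps (Suc m)"
    by (simp add: harm_binom_fps_eq mharm_fps_Suc ac_simps)
  also have "(binom_fps p * mharm_fps (Suc m)) $ n
      = (\<Sum>k=0..n. real ((k+p) choose k) * mharm (n-k) (m+1))"
    by (simp add: fps_mult_nth binom_fps_def mharm_fps_def)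
  finally show ?thesis .
qed

theorem theorem10:
  fixes n p m :: nat
  shows "((\<Sum>k=0..n. real ((k+p) choose k) * mharm (n-k) m * (harm (k+p) - harm p))
           = (\<Sum>k=0..n. real ((k+p) choose k) * mharm (n-k) (m+1)))
      \<and> ((\<Sum>k=0..n. real ((k+p) choose k) * (harm (k+p) - harm p))
           = (\<Sum>k=0..n. real ((k+p) choose k) * harm (n-k)))
      \<and> ((\<Sum>k=0..n. real ((k+p) choose k) * harm (n-k) * (harm (k+p) - harm p))
           = (\<Sum>k=0..n. real ((k+p) choose k) * ((harm (n-k))^2 - harm2 (n-k))))"
  using sum_binom_harm_diff_mharm[where m = m] sum_binom_harm_diff_mharm[where m = 0]
    sum_binom_harm_diff_mharm[where m = 1]
  unfolding add_0 one_add_one mharm_0 mharm_1 mharm_2 by simp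

end
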